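(* Let $\hat{x}$ be the final value of the vector $x$ in Algorithm 1 and let $OPT$ be a set maximizing $f$ among subsets of $N$ of size at most $k$. If $\|\hat{x}\|_1<k$, then $F(\hat{x})\ge(1-p)\cdot\big[p\cdot f(OPT)+(1-p)\cdot f(OPT\setminus\mathrm{supp}(\hat{x}))\big]-c\tau$.
   Context: Setting: finite ground set $N$ whose elements arrive one at a time in a stream, non-negative submodular $f\colon 2^N\to\mathbb{R}_{\ge 0}$, positive integer $k$. $\mathbf{1}_A$ is the characteristic vector of $A$. $F$ is the multilinear extension of $f$: $F(x)=\sum_{A\subseteq N} f(A)\prod_{u\in A}x_u\prod_{u\notin A}(1-x_u)$ for $x\in[0,1]^N$, and $\partial_uF(x)=F(x\vee \mathbf{1}_u)-F(x\wedge\mathbf{1}_{N\setminus\{u\}})$ (coordinatewise max/min). $\mathrm{supp}(x)=\{u: x_u>0\}$. Algorithm 1 has parameters $p\in(0,1)$, $c>0$, $\alpha\in(0,1]$ and a number $\tau$. It starts with $x=\mathbf{0}$, and when an element $u$ arrives, if $\partial_uF(x)\ge c\tau/k$ it sets $x\leftarrow x+\min\{p,\,k-\|x\|_1\}\cdot\mathbf{1}_u$ (otherwise $x$ is unchanged). After the stream ends, it computes a random set $S_1$ with $|S_1|\le k$ and $\mathbb{E}[f(S_1)]\ge F(x)$, and a random set $S_2\subseteq\mathrm{supp}(x)$ with $|S_2|\le k$ and $\mathbb{E}[f(S_2)]\ge\alpha\cdot\max_{S\subseteq\mathrm{supp}(x),|S|\le k}f(S)$, and outputs the better of $S_1,S_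2$.
   Formalization: The parameter tau of Algorithm 1 is taken to be nonnegative (tau >= 0) rather than an arbitrary number. The paper assumes this as well. *)

theory Defs
  imports Complex_Main
begin

text \<open>Ground set N (finite), set function f on subsets of N, vectors x :: 'a \<Rightarrow> real
  (only coordinates in N matter).\<close>

definition submodular_on :: "'a set \<Rightarrow> ('a set \<Rightarrow> real) \<Rightarrow> bool" where
  "submodular_on N f \<longleftrightarrow>
     (\<forall>A B. A \<subseteq> N \<longrightarrow> B \<subseteq> N \<longrightarrow> f (A \<union> B) + f (A \<inter> B) \<le> f A + f B)"

definition nonneg_on :: "'a set \<Rightarrow> ('a set \<Rightarrow> real) \<Rightarrow> bool" where
  "nonneg_on N f \<longleftrightarrow> (\<forall>A. A \<subseteq> N \<longrightarrow> 0 \<le> f A)"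

definition multilinear_ext :: "'a set \<Rightarrow> ('a set \<Rightarrow> real) \<Rightarrow> ('a \<Rightarrow> real) \<Rightarrow> real" where
  "multilinear_ext N f x =
     (\<Sum>A\<in>Pow N. f A * (\<Prod>u\<in>A. x u) * (\<Prod>u\<in>N - A. 1 - x u))"

definition charvec :: "'a set \<Rightarrow> 'a \<Rightarrow> real" where
  "charvec A = (\<lambda>v. if v \<in> A then 1 else 0)"

definition partialF :: "'a set \<Rightarrow> ('a set \<Rightarrow> real) \<Rightarrow> ('a \<Rightarrow> real) \<Rightarrow> 'a \<Rightarrow> real" where
  "partialF N f x u =
     multilinear_ext N f (\<lambda>v. max (x v) (charvec {u} v))
   - multilinear_ext N f (\<lambda>v. min (x v) (charvec (N - {u}) v))"

definition norm1 :: "'a set \<Rightarrow> ('a \<Rightarrow> real) \<Rightarrow> real" where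
  "norm1 N x = (\<Sum>u\<in>N. \<bar>x u\<bar>)"

definition supp :: "'a set \<Rightarrow> ('a \<Rightarrow> real) \<Rightarrow> 'a set" where
  "supp N x = {u \<in> N. x u > 0}"

definition alg1_step ::
  "'a set \<Rightarrow> ('a set \<Rightarrow> real) \<Rightarrow> nat \<Rightarrow> real \<Rightarrow> real \<Rightarrow> real \<Rightarrow> ('a \<Rightarrow> real) \<Rightarrow> 'a \<Rightarrow> ('a \<Rightarrow> real)" where
  "alg1_step N f k p c \<tau> x u =
     (if partialF N f x u \<ge> c * \<tau> / real k
      then (\<lambda>v. x v + min p (real k - norm1 N x) * charvec {u} v)
      else x)"

definition alg1_final ::
  "'a set \<Rightarrow> ('a set \<Rightarrow> real) \<Rightarrow> nat \<Rightarrow> real \<Rightarrow> real \<Rightarrow> real \<Rightarrow> 'a list \<Rightarrow> ('a \<Rightarrow> real)" where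
  "alg1_final N f k p c \<tau> \<sigma> = foldl (alg1_step N f k p c \<tau>) (\<lambda>_. 0) \<sigma>"

end

theory Submission
  imports Defs
begin

text \<open>While the budget \<open>k\<close> is not exhausted, every accepted element receives the
  full increment \<open>p\<close>, so the final vector is \<open>p \<cdot> 1\<^sub>A\<close> with \<open>A = supp x\<close> and
  \<open>F(x) = E[f(A(p))]\<close>. An element \<open>u\<close> rejected against an earlier \<open>p \<cdot> 1\<^sub>B\<close>, \<open>B \<subseteq> A\<close>, has
  \<open>E[f(u | B(p))] < c\<tau>/k\<close>, and by submodularity \<open>E[f(u | A(p))]\<close> is even smaller. Summing over
  the at most \<open>k\<close> elements of \<open>D = OPT - A\<close> gives \<open>E[f(A(p) \<union> D)] \<le> F(x) + c\<tau>\<close>. On the other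
  hand \<open>E[g(B(p))] \<ge> p g(B) + (1 - p) g({})\<close> for submodular \<open>g\<close>; applied to \<open>g = f(\<cdot> \<union> D)\<close> on
  \<open>B = A \<inter> OPT\<close>, after dropping the nonnegative contribution of \<open>A - OPT\<close>, it bounds
  \<open>E[f(A(p) \<union> D)]\<close> from below by \<open>(1 - p)(p f(OPT) + (1 - p) f(D))\<close>.\<close>

section \<open>Expectations over random subsets\<close>

text \<open>\<open>sample_exp p A g\<close> is \<open>E[g(A(p))]\<close>, where the random set \<open>A(p)\<close> contains each element
  of \<open>A\<close> independently with probability \<open>p\<close>.\<close>

definition sample_exp :: "real \<Rightarrow> 'a set \<Rightarrow> ('a set \<Rightarrow> real) \<Rightarrow> real" where
  "sample_exp p A g = (\<Sum>S\<in>Pow A. p ^ card S * (1 - p) ^ card (A - S) * g S)"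

lemma sample_exp_empty [simp]: "sample_exp p {} g = g {}"
  by (simp add: sample_exp_def)

lemma sample_exp_insert:
  assumes "finite A" "a \<notin> A"
  shows "sample_exp p (insert a A) g
           = p * sample_exp p A (\<lambda>S. g (insert a S)) + (1 - p) * sample_exp p A g"
proof -
  let ?w = "\<lambda>S. p ^ card S * (1 - p) ^ card (insert a A - S) * g S"
  have inj: "inj_on (insert a) (Pow A)"
    using assms(2) by (intro inj_onI) (metis PowD insert_ident subsetD)
  have split: "sample_exp p (insert a A) g = sum ?w (Pow A) + sum ?w (insert a ` Pow A)"
    unfolding sample_exp_def Pow_insert
    by (rule sum.union_disjoint) (use assms in auto)
  have without_a: "sum ?w (Pow A) = (1 - p) * sample_exp p A g"
    unfolding sample_exp_def sum_distrib_left
  proof (rule sum.cong [OF refl])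
    fix S assume "S \<in> Pow A"
    then have "insert a A - S = insert a (A - S)" "a \<notin> A - S" using assms(2) by auto
    then have "card (insert a A - S) = Suc (card (A - S))" using assms(1) by simp
    then show "?w S = (1 - p) * (p ^ card S * (1 - p) ^ card (A - S) * g S)" by simp
  qed
  have with_a: "sum ?w (insert a ` Pow A) = p * sample_exp p A (\<lambda>S. g (insert a S))"
    unfolding sample_exp_def sum_distrib_left sum.reindex [OF inj] comp_def
  proof (rule sum.cong [OF refl])
    fix S assume "S \<in> Pow A"
    then have "insert a A - insert a S = A - S" "finite S" "a \<notin> S"
      using assms finite_subset by auto
    then show "?w (insert a S) = p * (p ^ card S * (1 - p) ^ card (A - S) * g (insert a S))"
      by simp
  qed
  show ?thesis using split without_a with_a by simp
qed

lemma sample_exp_const: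
  assumes "finite A"
  shows "sample_exp p A (\<lambda>_. c) = c"
  using assms by (induction A rule: finite_induct) (simp_all add: sample_exp_insert algebra_simps)

lemma sample_exp_mono:
  assumes "0 \<le> p" "p \<le> 1" "\<And>S. S \<subseteq> A \<Longrightarrow> g S \<le> h S"
  shows "sample_exp p A g \<le> sample_exp p A h"
  unfolding sample_exp_def using assms by (intro sum_mono mult_left_mono) auto

lemma sample_exp_diff: "sample_exp p A (\<lambda>S. g S - h S) = sample_exp p A g - sample_exp p A h"
  unfolding sample_exp_def by (simp add: right_diff_distrib sum_subtractf)

lemma sample_exp_cmult: "sample_exp p A (\<lambda>S. c * g S) = c * sample_exp p A g"
  unfolding sample_exp_def by (simp add: sum_distrib_left mult_ac)

lemma sample_exp_sum: "sample_exp p A (\<lambda>S. \<Sum>u\<in>D. g u S) = (\<Sum>u\<in>D. sample_exp p A (g u))"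
  unfolding sample_exp_def by (simp add: sum_distrib_left sum.swap [of _ D])

lemma sample_exp_union:
  assumes "finite A" "finite B" "A \<inter> B = {}"
  shows "sample_exp p (A \<union> B) g = sample_exp p B (\<lambda>T. sample_exp p A (\<lambda>R. g (R \<union> T)))"
  using assms(2,3)
proof (induction B arbitrary: g rule: finite_induct)
  case empty
  then show ?case by simp
next
  case (insert a B g)
  have "a \<notin> A \<union> B" using insert by auto
  then have "sample_exp p (A \<union> insert a B) g
      = p * sample_exp p (A \<union> B) (\<lambda>S. g (insert a S)) + (1 - p) * sample_exp p (A \<union> B) g"
    using sample_exp_insert [of "A \<union> B" a p g] assms(1) insert(1) by simp
  also have "\<dots> = p * sample_exp p B (\<lambda>T. sample_exp p A (\<lambda>R. g (insert a (R \<union> T))))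
                  + (1 - p) * sample_exp p B (\<lambda>T. sample_exp p A (\<lambda>R. g (R \<union> T)))"
    using insert.IH [of "\<lambda>S. g (insert a S)"] insert.IH [of g] insert(4) by auto
  also have "\<dots> = sample_exp p (insert a B) (\<lambda>T. sample_exp p A (\<lambda>R. g (R \<union> T)))"
    using sample_exp_insert [OF insert(1,2)] by simp
  finally show ?case .
qed

section \<open>Submodularity\<close>

definition marginal :: "('a set \<Rightarrow> real) \<Rightarrow> 'a \<Rightarrow> 'a set \<Rightarrow> real" where
  "marginal f u S = f (insert u S) - f S"

lemma submodular_onD:
  "submodular_on N f \<Longrightarrow> A \<subseteq> N \<Longrightarrow> B \<subseteq> N \<Longrightarrow> f (A \<union> B) + f (A \<inter> B) \<le> f A + f B"
  unfolding submodular_on_def by blast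

lemma submodular_on_shift:
  assumes "submodular_on N g" "T \<subseteq> N"
  shows "submodular_on N (\<lambda>R. g (R \<union> T))"
  unfolding submodular_on_def
proof (intro allI impI)
  fix X Y assume "X \<subseteq> N" "Y \<subseteq> N"
  moreover have "(X \<union> T) \<union> (Y \<union> T) = (X \<union> Y) \<union> T" "(X \<union> T) \<inter> (Y \<union> T) = (X \<inter> Y) \<union> T"
    by auto
  ultimately show "g ((X \<union> Y) \<union> T) + g ((X \<inter> Y) \<union> T) \<le> g (X \<union> T) + g (Y \<union> T)"
    using submodular_onD [OF assms(1), of "X \<union> T" "Y \<union> T"] assms(2) by auto
qed

lemma marginal_antimono:
  assumes "submodular_on N f" "R \<union> T \<subseteq> N" "u \<in> N" "u \<notin> T"
  shows "marginal f u (R \<union> T) \<le> marginal f u R"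
proof -
  have "insert u R \<union> (R \<union> T) = insert u (R \<union> T)" "insert u R \<inter> (R \<union> T) = R"
    using assms(4) by auto
  then show ?thesis
    using submodular_onD [OF assms(1), of "insert u R" "R \<union> T"] assms(2,3)
    by (simp add: marginal_def)
qed

lemma submodular_on_union_le_sum_marginal:
  assumes "submodular_on N f" "finite D" "S \<union> D \<subseteq> N"
  shows "f (S \<union> D) - f S \<le> (\<Sum>u\<in>D. marginal f u S)"
  using assms(2,3)
proof (induction D rule: finite_induct)
  case empty
  then show ?case by simp
next
  case (insert a D)
  have "(S \<union> D) \<union> insert a S = S \<union> insert a D" "(S \<union> D) \<inter> insert a S = S"
    using insert(2) by auto
  then have "f (S \<union> insert a D) - f (S \<union> D) \<le> marginal f a S"
    using submodular_onD [OF assms(1), of "S \<union> D" "insert a S"] insert(4)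
    by (simp add: marginal_def)
  then show ?case using insert by simp
qed

lemma sample_exp_ge_endpoints:
  assumes "finite A" "A \<subseteq> N" "submodular_on N h" "0 \<le> p" "p \<le> 1"
  shows "p * h A + (1 - p) * h {} \<le> sample_exp p A h"
  using assms(1-3)
proof (induction A arbitrary: h rule: finite_induct)
  case empty
  then show ?case by (simp add: algebra_simps)
next
  case (insert a A h)
  have "submodular_on N (\<lambda>S. h (insert a S))"
    using submodular_on_shift [OF insert(5), of "{a}"] insert(4) by simp
  then have with_a: "p * h (insert a A) + (1 - p) * h {a} \<le> sample_exp p A (\<lambda>S. h (insert a S))"
    using insert.IH insert(4) by auto
  have without_a: "p * h A + (1 - p) * h {} \<le> sample_exp p A h"
    using insert.IH insert(4,5) by auto
  have "h ({a} \<union> A) + h ({a} \<inter> A) \<le> h {a} + h A"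
    using submodular_onD [OF insert(5), of "{a}" A] insert(4) by auto
  then have submod: "h (insert a A) + h {} \<le> h {a} + h A"
    using insert(2) by simp
  have "p * h (insert a A) + (1 - p) * h {}
      = p * (p * h (insert a A) + (1 - p) * h {a}) + (1 - p) * (p * h A + (1 - p) * h {})
        - p * (1 - p) * (h {a} + h A - h (insert a A) - h {})"
    by (simp add: algebra_simps)
  also have "\<dots> \<le> p * (p * h (insert a A) + (1 - p) * h {a}) + (1 - p) * (p * h A + (1 - p) * h {})"
    using submod assms(4,5) by simp
  also have "\<dots> \<le> p * sample_exp p A (\<lambda>S. h (insert a S)) + (1 - p) * sample_exp p A h"
    using with_a without_a assms(4,5) by (intro add_mono mult_left_mono) auto
  also have "\<dots> = sample_exp p (insert a A) h"
    using sample_exp_insert [OF insert(1,2)] by simp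
  finally show ?case .
qed

lemma sample_exp_ge_subset:
  assumes "finite A" "A \<subseteq> N" "B \<subseteq> A" "submodular_on N h" "nonneg_on N h" "0 \<le> p" "p \<le> 1"
  shows "(1 - p) * (p * h B + (1 - p) * h {}) \<le> sample_exp p A h"
proof -
  have fin: "finite B" "finite (A - B)" using assms(1,3) finite_subset by auto
  have "(1 - p) * (p * h B + (1 - p) * h {}) \<le> (1 - p) * sample_exp p B h"
    using sample_exp_ge_endpoints [OF fin(1) _ assms(4,6,7)] assms(2,3,7)
    by (intro mult_left_mono) auto
  also have "\<dots> = sample_exp p B (\<lambda>T. (1 - p) * h T)"
    by (simp add: sample_exp_cmult)
  also have "\<dots> \<le> sample_exp p B (\<lambda>T. sample_exp p (A - B) (\<lambda>R. h (R \<union> T)))"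
  proof (rule sample_exp_mono [OF assms(6,7)])
    fix T assume "T \<subseteq> B"
    then have "T \<subseteq> N" "A - B \<subseteq> N" "(A - B) \<union> T \<subseteq> N" using assms(2,3) by auto
    then have "p * h ((A - B) \<union> T) + (1 - p) * h ({} \<union> T) \<le> sample_exp p (A - B) (\<lambda>R. h (R \<union> T))"
      using sample_exp_ge_endpoints [OF fin(2) _ submodular_on_shift [OF assms(4)]] assms(6,7)
      by blast
    moreover have "0 \<le> p * h ((A - B) \<union> T)"
      using \<open>(A - B) \<union> T \<subseteq> N\<close> assms(5,6) by (simp add: nonneg_on_def)
    ultimately show "(1 - p) * h T \<le> sample_exp p (A - B) (\<lambda>R. h (R \<union> T))" by simp
  qed
  also have "\<dots> = sample_exp p A h"
  proof -
    have "(A - B) \<union> B = A" "(A - B) \<inter> B = {}" using assms(3) by auto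
    then show ?thesis using sample_exp_union [OF fin(2,1), of p h] by simp
  qed
  finally show ?thesis .
qed

lemma sample_exp_marginal_antimono:
  assumes "finite A" "A \<subseteq> N" "A' \<subseteq> A" "u \<in> N - A" "submodular_on N f" "0 \<le> p" "p \<le> 1"
  shows "sample_exp p A (marginal f u) \<le> sample_exp p A' (marginal f u)"
proof -
  have fin: "finite A'" "finite (A - A')" using assms(1,3) finite_subset by auto
  have "sample_exp p A (marginal f u)
      = sample_exp p (A - A') (\<lambda>T. sample_exp p A' (\<lambda>R. marginal f u (R \<union> T)))"
  proof -
    have "A' \<union> (A - A') = A" "A' \<inter> (A - A') = {}" using assms(3) by auto
    then show ?thesis using sample_exp_union [OF fin, of p "marginal f u"] by simp
  qed
  also have "\<dots> \<le> sample_exp p (A - A') (\<lambda>T. sample_exp p A' (marginal f u))"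
    using assms by (intro sample_exp_mono marginal_antimono [OF assms(5)]) auto
  also have "\<dots> = sample_exp p A' (marginal f u)"
    by (rule sample_exp_const [OF fin(2)])
  finally show ?thesis .
qed

lemma sample_exp_union_le_sum_marginal:
  assumes "submodular_on N f" "finite D" "A \<subseteq> N" "D \<subseteq> N" "0 \<le> p" "p \<le> 1"
  shows "sample_exp p A (\<lambda>S. f (S \<union> D)) - sample_exp p A f \<le> (\<Sum>u\<in>D. sample_exp p A (marginal f u))"
proof -
  have "sample_exp p A (\<lambda>S. f (S \<union> D)) - sample_exp p A f = sample_exp p A (\<lambda>S. f (S \<union> D) - f S)"
    by (rule sample_exp_diff [symmetric])
  also have "\<dots> \<le> sample_exp p A (\<lambda>S. \<Sum>u\<in>D. marginal f u S)"
    using assms by (intro sample_exp_mono submodular_on_union_le_sum_marginal) auto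
  also have "\<dots> = (\<Sum>u\<in>D. sample_exp p A (marginal f u))"
    by (rule sample_exp_sum)
  finally show ?thesis .
qed

lemma sample_exp_ge_of_marginal_bound:
  fixes f :: "'a set \<Rightarrow> real" and \<epsilon> :: real
  assumes "finite N" "A \<subseteq> N" "T \<subseteq> N" "submodular_on N f" "nonneg_on N f" "0 \<le> p" "p \<le> 1"
    and small: "\<forall>u \<in> T - A. sample_exp p A (marginal f u) \<le> \<epsilon>"
  shows "(1 - p) * (p * f T + (1 - p) * f (T - A)) - card (T - A) * \<epsilon> \<le> sample_exp p A f"
proof -
  define D where "D = T - A"
  have fin: "finite A" "finite D" using assms(1-3) unfolding D_def by (auto intro: finite_subset)
  have "D \<subseteq> N" using assms(3) by (auto simp: D_def)
  have "sample_exp p A (\<lambda>S. f (S \<union> D)) - sample_exp p A f \<le> (\<Sum>u\<in>D. sample_exp p A (marginal f u))"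
    using sample_exp_union_le_sum_marginal [OF assms(4) fin(2) assms(2) \<open>D \<subseteq> N\<close> assms(6,7)] .
  also have "\<dots> \<le> card D * \<epsilon>"
    using small by (intro sum_bounded_above) (simp add: D_def)
  finally have gain: "sample_exp p A (\<lambda>S. f (S \<union> D)) - card D * \<epsilon> \<le> sample_exp p A f" by simp
  have "nonneg_on N (\<lambda>S. f (S \<union> D))"
    using assms(5) \<open>D \<subseteq> N\<close> by (auto simp: nonneg_on_def)
  then have "(1 - p) * (p * f ((A \<inter> T) \<union> D) + (1 - p) * f ({} \<union> D)) \<le> sample_exp p A (\<lambda>S. f (S \<union> D))"
    using sample_exp_ge_subset [OF fin(1) assms(2) _ submodular_on_shift [OF assms(4) \<open>D \<subseteq> N\<close>]] assms(6,7)
    by blast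
  moreover have "(A \<inter> T) \<union> D = T" by (auto simp: D_def)
  ultimately show ?thesis using gain by (simp add: D_def)
qed

section \<open>The multilinear extension at scaled indicator vectors\<close>

lemma multilinear_weight_vanishes:
  fixes x :: "'a \<Rightarrow> real"
  assumes "finite N" "B \<subseteq> N" "A \<inter> B = {}" "S \<subseteq> N" "S \<notin> (\<lambda>T. T \<union> B) ` Pow A"
    and x: "\<forall>v\<in>N. x v = (if v \<in> A then p else if v \<in> B then 1 else 0)"
  shows "(\<Prod>u\<in>S. x u) * (\<Prod>u\<in>N - S. 1 - x u) = 0"
proof -
  have fin: "finite S" "finite (N - S)" using assms(1,4) finite_subset by auto
  have "\<not> (S \<subseteq> A \<union> B \<and> B \<subseteq> S)"
  proof
    assume "S \<subseteq> A \<union> B \<and> B \<subseteq> S"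
    then have "S = (S - B) \<union> B" "S - B \<in> Pow A" by auto
    with assms(5) show False by blast
  qed
  then consider (outside) v where "v \<in> S" "v \<notin> A \<union> B" | (missing) v where "v \<in> B" "v \<notin> S"
    by blast
  then show ?thesis
  proof cases
    case outside
    then have "x v = 0" using x assms(4) by auto
    then have "(\<Prod>u\<in>S. x u) = 0" using outside(1) fin(1) by (auto simp: prod_zero_iff)
    then show ?thesis by simp
  next
    case missing
    then have "v \<in> N" "v \<notin> A" using assms(2,3) by auto
    then have "v \<in> N - S" "1 - x v = 0" using x missing by auto
    then have "(\<Prod>u\<in>N - S. 1 - x u) = 0" using fin(2) by (auto simp: prod_zero_iff)
    then show ?thesis by simp
  qed
qed

lemma multilinear_weight_eq:
  fixes x :: "'a \<Rightarrow> real"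
  assumes "finite N" "A \<subseteq> N" "B \<subseteq> N" "A \<inter> B = {}" "T \<subseteq> A"
    and x: "\<forall>v\<in>N. x v = (if v \<in> A then p else if v \<in> B then 1 else 0)"
  shows "(\<Prod>u\<in>T \<union> B. x u) * (\<Prod>u\<in>N - (T \<union> B). 1 - x u) = p ^ card T * (1 - p) ^ card (A - T)"
proof -
  have fin: "finite T" "finite B" "finite (A - T)" "finite (N - A - B)"
    using assms(1-3,5) by (auto intro: finite_subset)
  have x_A: "x v = p" if "v \<in> A" for v using x assms(2) that by auto
  have x_B: "x v = 1" if "v \<in> B" for v
  proof -
    have "v \<in> N" "v \<notin> A" using assms(3,4) that by auto
    then show ?thesis using x that by simp
  qed
  have "(\<Prod>u\<in>T \<union> B. x u) = (\<Prod>u\<in>T. x u) * (\<Prod>u\<in>B. x u)"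
    using fin assms(4,5) by (intro prod.union_disjoint) auto
  also have "\<dots> = (\<Prod>u\<in>T. p) * (\<Prod>u\<in>B. 1)"
    using x_A x_B assms(5) by (intro arg_cong2 [where f = "(*)"] prod.cong) auto
  finally have in_set: "(\<Prod>u\<in>T \<union> B. x u) = p ^ card T" by simp
  have "N - (T \<union> B) = (A - T) \<union> (N - A - B)" using assms(2,4,5) by auto
  then have "(\<Prod>u\<in>N - (T \<union> B). 1 - x u) = (\<Prod>u\<in>(A - T) \<union> (N - A - B). 1 - x u)"
    by simp
  also have "\<dots> = (\<Prod>u\<in>A - T. 1 - x u) * (\<Prod>u\<in>N - A - B. 1 - x u)"
    using fin assms(1) by (intro prod.union_disjoint) auto
  also have "\<dots> = (\<Prod>u\<in>A - T. 1 - p) * (\<Prod>u\<in>N - A - B. 1)"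
    using x_A x by (intro arg_cong2 [where f = "(*)"] prod.cong) auto
  finally have out_set: "(\<Prod>u\<in>N - (T \<union> B). 1 - x u) = (1 - p) ^ card (A - T)" by simp
  show ?thesis using in_set out_set by simp
qed

lemma multilinear_ext_eq_sample_exp:
  fixes x :: "'a \<Rightarrow> real"
  assumes "finite N" "A \<subseteq> N" "B \<subseteq> N" "A \<inter> B = {}"
    and x: "\<forall>v\<in>N. x v = (if v \<in> A then p else if v \<in> B then 1 else 0)"
  shows "multilinear_ext N f x = sample_exp p A (\<lambda>S. f (S \<union> B))"
proof -
  let ?t = "\<lambda>S. f S * (\<Prod>u\<in>S. x u) * (\<Prod>u\<in>N - S. 1 - x u)"
  have inj: "inj_on (\<lambda>T. T \<union> B) (Pow A)"
    using assms(4) by (intro inj_onI) blast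
  have "multilinear_ext N f x = sum ?t (Pow N)"
    by (simp add: multilinear_ext_def)
  also have "\<dots> = sum ?t ((\<lambda>T. T \<union> B) ` Pow A)"
  proof (rule sum.mono_neutral_right)
    show "\<forall>S\<in>Pow N - (\<lambda>T. T \<union> B) ` Pow A. ?t S = 0"
      using multilinear_weight_vanishes [OF assms(1,3,4) _ _ x] by (simp add: mult.assoc)
  qed (use assms(1-3) in auto)
  also have "\<dots> = sum (?t \<circ> (\<lambda>T. T \<union> B)) (Pow A)"
    by (rule sum.reindex [OF inj])
  also have "\<dots> = sample_exp p A (\<lambda>S. f (S \<union> B))"
    unfolding sample_exp_def comp_def
    using multilinear_weight_eq [OF assms(1-4) _ x] by (intro sum.cong) (auto simp: mult_ac)
  finally show ?thesis .
qed

lemma partialF_charvec_eq_sample_exp: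
  assumes "finite N" "A \<subseteq> N" "u \<in> N - A" "0 \<le> p" "p \<le> 1"
  shows "partialF N f (\<lambda>v. p * charvec A v) u = sample_exp p A (marginal f u)"
proof -
  have "multilinear_ext N f (\<lambda>v. max (p * charvec A v) (charvec {u} v))
      = sample_exp p A (\<lambda>S. f (S \<union> {u}))"
    by (rule multilinear_ext_eq_sample_exp) (use assms in \<open>auto simp: charvec_def\<close>)
  moreover have "multilinear_ext N f (\<lambda>v. min (p * charvec A v) (charvec (N - {u}) v))
      = sample_exp p A (\<lambda>S. f (S \<union> {}))"
    by (rule multilinear_ext_eq_sample_exp) (use assms in \<open>auto simp: charvec_def\<close>)
  moreover have "marginal f u = (\<lambda>S. f (insert u S) - f S)"
    by (simp add: fun_eq_iff marginal_def)
  ultimately show ?thesis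
    by (simp add: partialF_def sample_exp_diff)
qed

section \<open>Algorithm 1 below its budget\<close>

lemma norm1_add_charvec:
  assumes "finite N" "u \<in> N" "\<forall>v. 0 \<le> x v" "0 \<le> m"
  shows "norm1 N (\<lambda>v. x v + m * charvec {u} v) = norm1 N x + m"
proof -
  have "norm1 N (\<lambda>v. x v + m * charvec {u} v) = (\<Sum>v\<in>N. x v + m * charvec {u} v)"
    unfolding norm1_def using assms(3,4) by (intro sum.cong) (auto simp: charvec_def)
  also have "\<dots> = (\<Sum>v\<in>N. x v) + m"
    using assms(1,2) by (simp add: sum.distrib charvec_def sum_distrib_left [symmetric])
  also have "(\<Sum>v\<in>N. x v) = norm1 N x"
    unfolding norm1_def using assms(3) by simp
  finally show ?thesis .
qed

lemma alg1_step_invariant: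
  assumes "finite N" "u \<in> N" "0 \<le> p" "\<forall>v. 0 \<le> x v" "norm1 N x \<le> real k"
  shows "(\<forall>v. 0 \<le> alg1_step N f k p c \<tau> x u v)
    \<and> norm1 N x \<le> norm1 N (alg1_step N f k p c \<tau> x u)
    \<and> norm1 N (alg1_step N f k p c \<tau> x u) \<le> real k"
proof (cases "c * \<tau> / real k \<le> partialF N f x u")
  case True
  define m where "m = min p (real k - norm1 N x)"
  have step: "alg1_step N f k p c \<tau> x u = (\<lambda>v. x v + m * charvec {u} v)"
    using True by (simp add: alg1_step_def m_def)
  have m: "0 \<le> m" "m \<le> real k - norm1 N x" using assms(3,5) by (auto simp: m_def)
  then have "\<forall>v. 0 \<le> x v + m * charvec {u} v" using assms(4) by (simp add: charvec_def)
  then show ?thesis using m norm1_add_charvec [OF assms(1,2,4) m(1)] by (simp add: step)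
next
  case False
  then show ?thesis using assms(4,5) by (simp add: alg1_step_def)
qed

lemma alg1_final_snoc:
  "alg1_final N f k p c \<tau> (xs @ [u]) = alg1_step N f k p c \<tau> (alg1_final N f k p c \<tau> xs) u"
  by (simp add: alg1_final_def)

lemma alg1_final_invariant:
  assumes "finite N" "set xs \<subseteq> N" "0 \<le> p"
  shows "(\<forall>v. 0 \<le> alg1_final N f k p c \<tau> xs v) \<and> norm1 N (alg1_final N f k p c \<tau> xs) \<le> real k"
  using assms(2)
proof (induction xs rule: rev_induct)
  case Nil
  then show ?case by (simp add: alg1_final_def norm1_def)
next
  case (snoc u xs)
  then show ?case
    using alg1_step_invariant [OF assms(1) _ assms(3)] by (simp add: alg1_final_snoc)
qed

lemma alg1_final_norm_le_snoc:
  assumes "finite N" "set (xs @ [u]) \<subseteq> N" "0 \<le> p"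
  shows "norm1 N (alg1_final N f k p c \<tau> xs) \<le> norm1 N (alg1_final N f k p c \<tau> (xs @ [u]))"
  using alg1_final_invariant [OF assms(1) _ assms(3), of xs] alg1_step_invariant [OF assms(1) _ assms(3)]
    assms(2) by (simp add: alg1_final_snoc)

lemma alg1_step_below_budget:
  assumes "finite N" "u \<in> N" "u \<notin> A" "0 \<le> p"
    and "norm1 N (\<lambda>v. p * charvec A v) \<le> real k"
    and "norm1 N (alg1_step N f k p c \<tau> (\<lambda>v. p * charvec A v) u) < real k"
  shows "alg1_step N f k p c \<tau> (\<lambda>v. p * charvec A v) u
           = (if c * \<tau> / real k \<le> partialF N f (\<lambda>v. p * charvec A v) u
              then (\<lambda>v. p * charvec (insert u A) v) else (\<lambda>v. p * charvec A v))"
proof (cases "c * \<tau> / real k \<le> partialF N f (\<lambda>v. p * charvec A v) u")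
  case True
  let ?x = "\<lambda>v. p * charvec A v"
  define m where "m = min p (real k - norm1 N ?x)"
  have step: "alg1_step N f k p c \<tau> ?x u = (\<lambda>v. ?x v + m * charvec {u} v)"
    using True by (simp add: alg1_step_def m_def)
  have "0 \<le> m" "\<forall>v. 0 \<le> ?x v"
    using assms(4,5) by (auto simp: m_def charvec_def)
  then have "norm1 N ?x + m < real k"
    using assms(6) norm1_add_charvec [OF assms(1,2)] step by simp
  then have "m = p" by (auto simp: m_def)
  then show ?thesis
    using True assms(3) unfolding step by (auto simp: charvec_def fun_eq_iff)
next
  case False
  then show ?thesis by (simp add: alg1_step_def)
qed

lemma alg1_final_below_budget:
  assumes "finite N" "distinct xs" "set xs \<subseteq> N" "submodular_on N f" "0 \<le> p" "p \<le> 1"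
    and "norm1 N (alg1_final N f k p c \<tau> xs) < real k"
  shows "\<exists>A \<subseteq> set xs. alg1_final N f k p c \<tau> xs = (\<lambda>v. p * charvec A v) \<and>
           (\<forall>u \<in> set xs - A. sample_exp p A (marginal f u) < c * \<tau> / real k)"
  using assms(2,3,7)
proof (induction xs rule: rev_induct)
  case Nil
  have "alg1_final N f k p c \<tau> [] = (\<lambda>v. p * charvec {} v)"
    by (simp add: alg1_final_def charvec_def)
  then show ?case by simp
next
  case (snoc u xs)
  define x where "x = alg1_final N f k p c \<tau> xs"
  have u: "u \<in> N" "u \<notin> set xs" using snoc.prems(1,2) by auto
  have x': "alg1_final N f k p c \<tau> (xs @ [u]) = alg1_step N f k p c \<tau> x u"
    by (simp add: alg1_final_snoc x_def)
  have "norm1 N x < real k"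
    using alg1_final_norm_le_snoc [OF assms(1) snoc.prems(2) assms(5), of f k c \<tau>] snoc.prems(3)
    by (simp add: x_def)
  then obtain A where A: "A \<subseteq> set xs" "x = (\<lambda>v. p * charvec A v)"
    and rejected: "\<forall>w \<in> set xs - A. sample_exp p A (marginal f w) < c * \<tau> / real k"
    using snoc.IH snoc.prems(1,2) unfolding x_def by auto
  have "u \<notin> A" "A \<subseteq> N" "finite A"
    using A(1) u(2) snoc.prems(2) assms(1) finite_subset by auto
  have step: "alg1_step N f k p c \<tau> x u
      = (if c * \<tau> / real k \<le> partialF N f x u
         then (\<lambda>v. p * charvec (insert u A) v) else (\<lambda>v. p * charvec A v))"
    unfolding A(2)
    by (rule alg1_step_below_budget [OF assms(1) u(1) \<open>u \<notin> A\<close> assms(5)])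
      (use \<open>norm1 N x < real k\<close> snoc.prems(3) x' A(2) in auto)
  show ?case
  proof (cases "c * \<tau> / real k \<le> partialF N f x u")
    case True
    have "sample_exp p (insert u A) (marginal f w) < c * \<tau> / real k"
      if w: "w \<in> set (xs @ [u]) - insert u A" for w
    proof -
      have "w \<in> set xs - A" "w \<in> N - insert u A" using w snoc.prems(2) by auto
      then show ?thesis
        using sample_exp_marginal_antimono [of "insert u A" N A w f p] assms(4-6) rejected
          \<open>finite A\<close> \<open>A \<subseteq> N\<close> u(1) by (meson finite_insert insert_subset subset_insertI order.strict_trans1)
    qed
    then show ?thesis
      unfolding x' step using True A(1) by (intro exI [of _ "insert u A"]) auto
  next
    case False
    then have "sample_exp p A (marginal f u) < c * \<tau> / real k"
      using partialF_charvec_eq_sample_exp [OF assms(1) \<open>A \<subseteq> N\<close> _ assms(5,6)] u(1) \<open>u \<notin> A\<close>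
      by (simp add: A(2))
    then show ?thesis
      unfolding x' step using False A(1) rejected by (intro exI [of _ A]) auto
  qed
qed

theorem corollary3p6:
  fixes N :: "'a set" and f :: "'a set \<Rightarrow> real" and k :: nat
    and p c \<tau> :: real and \<sigma> :: "'a list" and OPT :: "'a set"
  assumes "finite N"
    and "distinct \<sigma>" and "set \<sigma> = N"
    and "nonneg_on N f" and "submodular_on N f"
    and "k > 0"
    and "0 < p" and "p < 1" and "c > 0" and "\<tau> \<ge> 0"
    and "OPT \<subseteq> N" and "card OPT \<le> k"
    and "\<forall>S. S \<subseteq> N \<and> card S \<le> k \<longrightarrow> f S \<le> f OPT"
    and "norm1 N (alg1_final N f k p c \<tau> \<sigma>) < real k"
  shows "multilinear_ext N f (alg1_final N f k p c \<tau> \<sigma>)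
           \<ge> (1 - p) * (p * f OPT + (1 - p) * f (OPT - supp N (alg1_final N f k p c \<tau> \<sigma>)))
             - c * \<tau>"
proof -
  let ?x = "alg1_final N f k p c \<tau> \<sigma>"
  have "\<exists>A \<subseteq> N. ?x = (\<lambda>v. p * charvec A v) \<and>
      (\<forall>u \<in> N - A. sample_exp p A (marginal f u) < c * \<tau> / real k)"
    using alg1_final_below_budget [OF assms(1,2) _ assms(5) _ _ assms(14)] assms(3,7,8) by simp
  then obtain A where "A \<subseteq> N" and x: "?x = (\<lambda>v. p * charvec A v)"
    and rejected: "\<forall>u \<in> N - A. sample_exp p A (marginal f u) < c * \<tau> / real k"
    by blast
  have "multilinear_ext N f ?x = sample_exp p A f"
    using multilinear_ext_eq_sample_exp [OF assms(1) \<open>A \<subseteq> N\<close>, of "{}"] x by (simp add: charvec_def)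
  moreover have "supp N ?x = A"
    using x \<open>A \<subseteq> N\<close> assms(7) by (auto simp: supp_def charvec_def)
  moreover have "\<forall>u \<in> OPT - A. sample_exp p A (marginal f u) \<le> c * \<tau> / real k"
    using rejected assms(11) by (meson Diff_iff less_imp_le subsetD)
  moreover have "card (OPT - A) * (c * \<tau> / real k) \<le> c * \<tau>"
  proof -
    have "card (OPT - A) \<le> k"
      using assms(1,11,12) card_mono [of OPT "OPT - A"] finite_subset by fastforce
    then have "card (OPT - A) * (c * \<tau> / real k) \<le> real k * (c * \<tau> / real k)"
      using assms(9,10) by (intro mult_right_mono) auto
    then show ?thesis using assms(6) by simp
  qed
  ultimately show ?thesis
    using sample_exp_ge_of_marginal_bound [OF assms(1) \<open>A \<subseteq> N\<close> assms(11,5,4), of p "c * \<tau> / real k"]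
      assms(7,8) by simp
qed

end
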